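(* Consider the erase-repetition game over a symbol set $S$ with $|S|\geq 8$. Then for every $n\geq 1$ Ann has a strategy guaranteeing that, whatever Ben plays, at some moment of the game the current sequence has length $n$ (the current sequence being nonrepetitive at every moment). In this sense Ann can build an arbitrarily long nonrepetitive sequence.
   Context: A repetition of size $h\geq1$ in a sequence is a block of consecutive terms of the form $x_1\ldots x_h x_1\ldots x_h$; a sequence is nonrepetitive if it contains no repetition of any size. The erase-repetition game over a symbol set $S$ is played by two players, Ann and Ben, who alternately (Ann first) choose a symbol from $S$ and append it to the end of the current sequence (initially empty). Whenever, after appending a symbol, the sequence contains a repetition (necessarily a suffix $x_1\ldots x_hx_1\ldots x_h$, and unique), the second copy $x_1\ldots x_h$ of the repeated block is immediately erased, and the next player continues by extending the remaining sequence. Thus after each move (and erasure) the current sequence is nonrepetitive. *)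

theory Defs
  imports Main
begin

definition nonrepetitive :: "'a list \<Rightarrow> bool" where
  "nonrepetitive w \<longleftrightarrow> \<not> (\<exists>u x z. x \<noteq> [] \<and> w = u @ x @ x @ z)"

definition rep_suffix :: "'a list \<Rightarrow> nat \<Rightarrow> bool" where
  "rep_suffix v h \<longleftrightarrow> (\<exists>u x. length x = h \<and> h \<ge> 1 \<and> v = u @ x @ x)"

(* One move of the erase-repetition game: append symbol a to the current sequence w;
   if a repetition (necessarily a suffix x x) arises, erase its second copy.
   (If w is nonrepetitive the suffix repetition is unique; LEAST is only used to pick it.) *)
definition game_move :: "'a list \<Rightarrow> 'a \<Rightarrow> 'a list" where
  "game_move w a =
     (let v = w @ [a] in
      if \<exists>h. rep_suffix v h then take (length v - (LEAST h. rep_suffix v h)) v else v)"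

fun history :: "('a list \<Rightarrow> 'a) \<Rightarrow> (nat \<Rightarrow> 'a) \<Rightarrow> nat \<Rightarrow> 'a list" where
  "history ann ben 0 = []"
| "history ann ben (Suc k) =
     history ann ben k @ [if even k then ann (history ann ben k) else ben (k div 2)]"

definition current_seq :: "('a list \<Rightarrow> 'a) \<Rightarrow> (nat \<Rightarrow> 'a) \<Rightarrow> nat \<Rightarrow> 'a list" where
  "current_seq ann ben k = foldl game_move [] (history ann ben k)"

end

theory Submission
  imports Defs Complex_Main
begin

(* Proof by entropy compression.  Fix a horizon of M rounds and an arbitrary adaptive
   strategy b of Ben.  Suppose no list c of M symbols played by Ann makes the current
   sequence reach length n within the 2M moves.  Then c can be recovered from a short
   record: the final sequence (shorter than n) together with the fate of each Ann move
   -- it survives; or it is erased by a repetition of size h, and then it equals the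
   symbol h places before it; or it is erased with the same size as the nearest earlier
   Ann symbol still present when it was played.  Sizes of distinct recorded erasures
   add up to at most 2M, and a weighted count bounds the number of records by
   7^M 9^(n-1); for |S| >= 8 and M large this is less than |S|^M / (n |S|^n), a
   contradiction.  So against every Ben strategy some list of Ann moves succeeds, and
   by determinacy of the finite 2M-move game Ann has one strategy (a function of the
   history) that succeeds against every Ben; a discrete intermediate value argument
   turns "length at least n" into "length exactly n". *)

section \<open>A single move\<close>

definition erased :: "'a list \<Rightarrow> 'a \<Rightarrow> nat" where
  "erased w a = (if \<exists>h. rep_suffix (w @ [a]) h then LEAST h. rep_suffix (w @ [a]) h else 0)"

lemma game_move_erased: "game_move w a = take (length w + 1 - erased w a) (w @ [a])"
  unfolding game_move_def erased_def Let_def by auto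

lemma erased_rep_suffix: "erased w a \<noteq> 0 \<Longrightarrow> rep_suffix (w @ [a]) (erased w a)"
  unfolding erased_def by (auto split: if_splits intro: LeastI_ex)

lemma length_game_move: "length (game_move w a) = length w + 1 - erased w a"
  unfolding game_move_erased by simp

lemma set_game_move: "set (game_move w a) \<subseteq> insert a (set w)"
  unfolding game_move_erased using set_take_subset by fastforce

(* A word ending in a square of size h has period h on its last h positions;
   this is what lets an erased symbol be recovered from the symbol h places earlier. *)
lemma rep_suffix_period:
  assumes "rep_suffix v h" "length v - h \<le> p" "p < length v"
  shows "h \<le> p \<and> 2 * h \<le> length v \<and> v ! p = v ! (p - h)"
proof -
  obtain u x where ux: "length x = h" "h \<ge> 1" "v = u @ x @ x"
    using assms(1) unfolding rep_suffix_def by blast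
  have lv: "length v = length u + 2 * h" using ux by simp
  have p1: "p \<ge> length u + h" using assms(2) lv by simp
  have v2: "v = (u @ x) @ x" using ux by simp
  have "v ! p = x ! (p - (length u + h))"
    unfolding v2 using ux p1 by (simp add: nth_append)
  moreover have "v ! (p - h) = x ! (p - h - length u)"
  proof -
    have "length u \<le> p - h" "p - h < length u + h" using p1 assms(3) lv by simp_all
    then show ?thesis using ux by (simp add: nth_append)
  qed
  ultimately show ?thesis using p1 lv by (simp add: diff_diff_add add.commute)
qed

section \<open>Replaying a list of moves\<close>

definition replay :: "'a list \<Rightarrow> 'a list" where
  "replay ms = foldl game_move [] ms"

lemma replay_Nil [simp]: "replay [] = []"
  unfolding replay_def by simp

lemma replay_snoc: "replay (ms @ [a]) = game_move (replay ms) a"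
  unfolding replay_def by simp

lemma set_replay: "set (replay ms) \<subseteq> set ms"
proof (induction ms rule: rev_induct)
  case (snoc a ms)
  then show ?case using set_game_move[of "replay ms" a] by (auto simp: replay_snoc)
qed simp

definition height :: "'a list \<Rightarrow> nat \<Rightarrow> nat" where
  "height s t = length (replay (take t s))"

lemma height_0 [simp]: "height s 0 = 0"
  unfolding height_def by simp

lemma replay_take_Suc:
  "t < length s \<Longrightarrow> replay (take (Suc t) s) = game_move (replay (take t s)) (s ! t)"
  by (simp add: take_Suc_conv_app_nth replay_snoc)

lemma height_Suc:
  "t < length s \<Longrightarrow> height s (Suc t) = height s t + 1 - erased (replay (take t s)) (s ! t)"
  unfolding height_def by (simp add: replay_take_Suc length_game_move)

(* The number of symbols erased by move t (counting moves from 1). *)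
definition erased_at :: "'a list \<Rightarrow> nat \<Rightarrow> nat" where
  "erased_at s t = height s (t - 1) + 1 - height s t"

(* Every move adds one symbol and erases some, so the erasures of all T moves
   together with the final height account for exactly T symbols. *)
lemma erased_at_telescope: "T \<le> length s \<Longrightarrow> (\<Sum>t = 1..T. erased_at s t) + height s T = T"
proof (induction T)
  case (Suc T)
  have "height s (Suc T) \<le> height s T + 1" using height_Suc[of T s] Suc.prems by simp
  then have "erased_at s (Suc T) + height s (Suc T) = height s T + 1"
    unfolding erased_at_def by simp
  then show ?case using Suc by (simp add: sum.cl_ivl_Suc)
qed simp

lemma replay_prefix_stable:
  assumes "i \<le> t" "t \<le> length s" "p \<le> height s i"
    and "\<forall>t'. i < t' \<and> t' \<le> t \<longrightarrow> p \<le> height s t'"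
  shows "take p (replay (take t s)) = take p (replay (take i s))"
  using assms
proof (induction t rule: dec_induct)
  case (step m)
  have m: "m < length s" using step by simp
  have pm: "p \<le> height s m" using step by (cases "m = i") auto
  have pS: "p \<le> height s (Suc m)" using step by auto
  have "take p (replay (take (Suc m) s))
      = take p (take (height s m + 1 - erased (replay (take m s)) (s ! m)) (replay (take m s) @ [s ! m]))"
    using m by (simp add: replay_take_Suc game_move_erased height_def)
  also have "\<dots> = take p (replay (take m s) @ [s ! m])"
    using pS height_Suc[OF m] by (simp add: min_def)
  also have "\<dots> = take p (replay (take m s))" using pm unfolding height_def by simp
  finally show ?case using step by simp
qed simp

lemma take_eq_shorter: "take T s = take T s' \<Longrightarrow> t \<le> T \<Longrightarrow> take t s = take t s'"
  by (metis min.absorb1 take_take)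

lemma height_dep: "take T s = take T s' \<Longrightarrow> t \<le> T \<Longrightarrow> height s t = height s' t"
  unfolding height_def by (metis take_eq_shorter)

section \<open>Alive and killed moves\<close>

(* Move i is alive up to time t if its symbol has stayed in the current sequence,
   i.e. the height stayed strictly above its position height s i. *)
definition alive :: "'a list \<Rightarrow> nat \<Rightarrow> nat \<Rightarrow> bool" where
  "alive s i t \<longleftrightarrow> (\<forall>t'. i < t' \<and> t' \<le> t \<longrightarrow> height s i < height s t')"

lemma alive_prefix:
  assumes "i < t" "t \<le> length s" "alive s i t"
  shows "take (Suc (height s i)) (replay (take t s)) = replay (take i s) @ [s ! i]"
proof -
  have i: "i < length s" using assms by simp
  have "height s i < height s (Suc i)" using assms unfolding alive_def by auto
  then have "erased (replay (take i s)) (s ! i) = 0" using height_Suc[OF i] by simp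
  then have step: "replay (take (Suc i) s) = replay (take i s) @ [s ! i]"
    using replay_take_Suc[OF i] by (simp add: game_move_erased)
  have "take (Suc (height s i)) (replay (take t s))
      = take (Suc (height s i)) (replay (take (Suc i) s))"
  proof (rule replay_prefix_stable)
    show "\<forall>t'. Suc i < t' \<and> t' \<le> t \<longrightarrow> Suc (height s i) \<le> height s t'"
      using assms(3) unfolding alive_def by (auto simp: Suc_le_eq)
  qed (use assms step in \<open>auto simp: height_def\<close>)
  also have "\<dots> = replay (take i s) @ [s ! i]" using step unfolding height_def by simp
  finally show ?thesis .
qed

lemma alive_symbol:
  assumes "i < t" "t \<le> length s" "alive s i t"
  shows "replay (take t s) ! height s i = s ! i"
    and "take (height s i) (replay (take t s)) = replay (take i s)"
proof -
  have e: "take (Suc (height s i)) (replay (take t s)) = replay (take i s) @ [s ! i]"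
    using alive_prefix[OF assms] .
  have "height s i < length (replay (take t s))"
    using arg_cong[OF e, of length] unfolding height_def by (auto simp: min_def split: if_splits)
  then show "replay (take t s) ! height s i = s ! i"
    by (metis e lessI nth_append_length nth_take height_def)
  have "take (height s i) (replay (take t s))
      = take (height s i) (take (Suc (height s i)) (replay (take t s)))" by simp
  also have "\<dots> = replay (take i s)" using e unfolding height_def by simp
  finally show "take (height s i) (replay (take t s)) = replay (take i s)" .
qed

definition killed :: "'a list \<Rightarrow> nat \<Rightarrow> bool" where
  "killed s i \<longleftrightarrow> (\<exists>t'. i < t' \<and> t' \<le> length s \<and> height s t' \<le> height s i)"

definition kill_time :: "'a list \<Rightarrow> nat \<Rightarrow> nat" where
  "kill_time s i = (LEAST t'. i < t' \<and> t' \<le> length s \<and> height s t' \<le> height s i)"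

definition kill_size :: "'a list \<Rightarrow> nat \<Rightarrow> nat" where
  "kill_size s i = erased_at s (kill_time s i)"

lemma kill_time_props:
  assumes "killed s i"
  shows "i < kill_time s i" "kill_time s i \<le> length s" "height s (kill_time s i) \<le> height s i"
    and "\<And>t'. i < t' \<Longrightarrow> t' < kill_time s i \<Longrightarrow> height s i < height s t'"
proof -
  let ?P = "\<lambda>t'. i < t' \<and> t' \<le> length s \<and> height s t' \<le> height s i"
  have "?P (kill_time s i)" using assms unfolding killed_def kill_time_def by (rule LeastI_ex)
  then show "i < kill_time s i" "kill_time s i \<le> length s"
    "height s (kill_time s i) \<le> height s i" by auto
  fix t' assume a: "i < t'" "t' < kill_time s i"
  have "\<not> ?P t'" using a(2) unfolding kill_time_def by (rule not_less_Least)
  then show "height s i < height s t'" using a \<open>kill_time s i \<le> length s\<close> by auto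
qed

lemma survivor_symbol:
  assumes "i < length s" "\<not> killed s i"
  shows "s ! i = replay s ! height s i"
proof -
  have "alive s i (length s)" using assms(2) unfolding killed_def alive_def by auto
  then show ?thesis using alive_symbol(1)[of i "length s" s] assms(1) by simp
qed

(* A killed move equals the symbol kill_size places before it in the sequence it was
   appended to: it lies in the erased second copy of a square of that size. *)
lemma killed_symbol:
  assumes "i < length s" "killed s i"
  shows "1 \<le> kill_size s i" "kill_size s i \<le> height s i"
    and "s ! i = replay (take i s) ! (height s i - kill_size s i)"
proof -
  note kp = kill_time_props[OF assms(2)]
  define m where "m = kill_time s i - 1"
  have m: "i \<le> m" "m < length s" "Suc m = kill_time s i" using kp unfolding m_def by auto
  define v where "v = replay (take m s) @ [s ! m]"
  define g where "g = erased (replay (take m s)) (s ! m)"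
  have lv: "length v = height s m + 1" unfolding v_def height_def by simp
  have lkill: "height s (kill_time s i) = height s m + 1 - g"
    using height_Suc[OF m(2)] m(3) unfolding g_def by simp
  have vi: "v ! height s i = s ! i \<and> take (height s i) v = replay (take i s) \<and> height s i \<le> height s m"
  proof (cases "m = i")
    case True then show ?thesis unfolding v_def height_def by simp
  next
    case False
    then have im: "i < m" using m by simp
    have al: "alive s i m" unfolding alive_def using kp(4) m by auto
    have "height s i < height s m" using al im unfolding alive_def by auto
    moreover have "replay (take m s) ! height s i = s ! i"
      "take (height s i) (replay (take m s)) = replay (take i s)"
      using alive_symbol[OF im _ al] m by auto
    ultimately show ?thesis unfolding v_def height_def by (simp add: nth_append)
  qed
  have g0: "g \<noteq> 0" using lkill kp(3) vi by auto
  have "rep_suffix v g"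
    using erased_rep_suffix[of "replay (take m s)" "s ! m"] g0 unfolding v_def g_def by simp
  then have per: "g \<le> height s i \<and> 2 * g \<le> length v \<and> v ! height s i = v ! (height s i - g)"
    using rep_suffix_period[of v g "height s i"] lv lkill kp(3) vi by simp
  have ks: "kill_size s i = g"
    unfolding kill_size_def erased_at_def using lkill per lv m(3) by (simp add: m_def)
  show "1 \<le> kill_size s i" "kill_size s i \<le> height s i" using ks g0 per by auto
  have "s ! i = v ! (height s i - g)" using per vi by simp
  also have "\<dots> = take (height s i) v ! (height s i - g)" using per g0 by simp
  finally show "s ! i = replay (take i s) ! (height s i - kill_size s i)" using vi ks by simp
qed

section \<open>The fate record of Ann's moves\<close>

definition has_parent :: "'a list \<Rightarrow> nat \<Rightarrow> bool" where
  "has_parent s r \<longleftrightarrow> (\<exists>r' < r. alive s (2 * r') (2 * r))"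

definition parent :: "'a list \<Rightarrow> nat \<Rightarrow> nat" where
  "parent s r = (GREATEST r'. r' < r \<and> alive s (2 * r') (2 * r))"

lemma parent_props:
  assumes "has_parent s r"
  shows "parent s r < r" "alive s (2 * parent s r) (2 * r)"
    and "\<And>r'. r' < r \<Longrightarrow> alive s (2 * r') (2 * r) \<Longrightarrow> r' \<le> parent s r"
proof -
  let ?P = "\<lambda>r'. r' < r \<and> alive s (2 * r') (2 * r)"
  obtain k where k: "?P k" using assms unfolding has_parent_def by auto
  have "?P (parent s r)" unfolding parent_def
    by (rule GreatestI_nat[of _ k r]) (use k in auto)
  then show "parent s r < r" "alive s (2 * parent s r) (2 * r)" by auto
  fix r' assume "r' < r" "alive s (2 * r') (2 * r)"
  then show "r' \<le> parent s r" unfolding parent_def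
    by (intro Greatest_le_nat[of _ r' r]) auto
qed

(* Cont: it is killed and its parent is killed
   with the same kill size, so the size need not be recorded.  Only Kill h carries a number, and distinct Kill-moves have distinct
   kill times, which is why the sizes recorded in a fate list are small on average. *)
datatype fate = Surv | Cont | Kill nat

definition fate :: "'a list \<Rightarrow> nat \<Rightarrow> fate" where
  "fate s r = (if \<not> killed s (2 * r) then Surv
     else if has_parent s r \<and> killed s (2 * parent s r)
             \<and> kill_size s (2 * parent s r) = kill_size s (2 * r) then Cont
     else Kill (kill_size s (2 * r)))"

lemma fate_Surv: "fate s r = Surv \<longleftrightarrow> \<not> killed s (2 * r)"
  unfolding fate_def by auto

lemma fate_Kill: "fate s r = Kill h \<Longrightarrow> killed s (2 * r) \<and> h = kill_size s (2 * r) \<and>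
   \<not> (has_parent s r \<and> killed s (2 * parent s r) \<and> kill_size s (2 * parent s r) = kill_size s (2 * r))"
  unfolding fate_def by (auto split: if_splits)

lemma fate_Cont: "fate s r = Cont \<Longrightarrow> killed s (2 * r) \<and>
   has_parent s r \<and> killed s (2 * parent s r) \<and> kill_size s (2 * parent s r) = kill_size s (2 * r)"
  unfolding fate_def by (auto split: if_splits)

lemma alive_dep:
  assumes "take T s = take T s'" "t \<le> T"
  shows "alive s i t = alive s' i t"
proof (cases "i \<le> t")
  case True
  then show ?thesis unfolding alive_def using height_dep[OF assms(1)] assms(2)
    by (metis (no_types, opaque_lifting) order.trans)
qed (auto simp: alive_def)

lemma parent_dep:
  assumes "take (2 * r) s = take (2 * r) s'"
  shows "has_parent s r = has_parent s' r" "parent s r = parent s' r"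
proof -
  have e: "\<And>r'. alive s (2 * r') (2 * r) = alive s' (2 * r') (2 * r)"
    using alive_dep[OF assms] by simp
  show "has_parent s r = has_parent s' r" unfolding has_parent_def e ..
  show "parent s r = parent s' r" unfolding parent_def e ..
qed

(* Given the fates and the moves before it, the kill size of a killed Ann move is
   determined: it is recorded directly (Kill h) or inherited from the parent (Cont). *)
lemma kill_size_determined:
  assumes "\<forall>r' < M. fate s r' = fate s' r'"
  shows "take (2 * r) s = take (2 * r) s' \<Longrightarrow> r < M \<Longrightarrow> killed s (2 * r)
    \<Longrightarrow> kill_size s (2 * r) = kill_size s' (2 * r)"
proof (induction r rule: less_induct)
  case (less r)
  have fr: "fate s r = fate s' r" using assms less.prems(2) by blast
  show ?case
  proof (cases "fate s r")
    case Surv then show ?thesis using fate_Surv less.prems(3) by auto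
  next
    case Cont
    have c: "has_parent s r" "killed s (2 * parent s r)"
      "kill_size s (2 * parent s r) = kill_size s (2 * r)"
      using fate_Cont[OF Cont] by auto
    have c': "kill_size s' (2 * parent s' r) = kill_size s' (2 * r)"
      using Cont fr fate_Cont by metis
    have pe: "parent s r = parent s' r" using parent_dep(2)[OF less.prems(1)] .
    have pl: "parent s r < r" using parent_props(1)[OF c(1)] .
    have "take (2 * parent s r) s = take (2 * parent s r) s'"
      using take_eq_shorter[OF less.prems(1)] pl by simp
    then have "kill_size s (2 * parent s r) = kill_size s' (2 * parent s r)"
      using less.IH[OF pl] pl less.prems(2) c(2) by simp
    then show ?thesis using c(3) c' pe by simp
  next
    case (Kill h)
    then show ?thesis using fate_Kill fr by metis
  qed
qed

section \<open>Plays against a fixed strategy of Ben\<close>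

fun play :: "('a list \<Rightarrow> 'a) \<Rightarrow> 'a list \<Rightarrow> nat \<Rightarrow> 'a list" where
  "play b c 0 = []"
| "play b c (Suc k) = play b c k @ [if even k then c ! (k div 2) else b (play b c k)]"

lemma length_play [simp]: "length (play b c k) = k"
  by (induction k) auto

lemma take_play: "k \<le> K \<Longrightarrow> take k (play b c K) = play b c k"
proof (induction K)
  case (Suc K)
  then show ?case by (cases "k = Suc K") auto
qed simp

lemma nth_play_Ann: "r < M \<Longrightarrow> play b c (2 * M) ! (2 * r) = c ! r"
proof -
  assume r: "r < M"
  have "play b c (2 * M) ! (2 * r) = take (Suc (2 * r)) (play b c (2 * M)) ! (2 * r)" by simp
  also have "\<dots> = c ! r" using take_play[of "Suc (2 * r)" "2 * M" b c] r by (simp add: nth_append)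
  finally show ?thesis .
qed

lemma play_dep: "take r c = take r c' \<Longrightarrow> k \<le> 2 * r \<Longrightarrow> play b c k = play b c' k"
proof (induction k)
  case (Suc k)
  have "even k \<Longrightarrow> c ! (k div 2) = c' ! (k div 2)"
  proof -
    have "k div 2 < r" using Suc.prems(2) by simp
    then show ?thesis using Suc.prems(1) by (metis nth_take)
  qed
  then show ?case using Suc by simp
qed simp

lemma set_play:
  assumes "set c \<subseteq> S" "\<forall>h. b h \<in> S" "length c = M" "k \<le> 2 * M"
  shows "set (play b c k) \<subseteq> S"
  using assms(4)
proof (induction k)
  case (Suc k)
  have "even k \<Longrightarrow> c ! (k div 2) \<in> S"
    using Suc.prems assms(1,3) nth_mem by fastforce
  then show ?case using Suc assms(2) by auto
qed simp

(* Each symbol is recovered from the final sequence if it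
   survives, and otherwise from the sequence before it, using its kill size. *)
lemma play_decoding:
  assumes "length c = M" "length c' = M"
    and "\<forall>r < M. fate (play b c (2 * M)) r = fate (play b c' (2 * M)) r"
    and "replay (play b c (2 * M)) = replay (play b c' (2 * M))"
  shows "c = c'"
proof -
  define s where "s = play b c (2 * M)"
  define s' where "s' = play b c' (2 * M)"
  have "take r c = take r c'" if "r \<le> M" for r
    using that
  proof (induction r)
    case (Suc r)
    then have rM: "r < M" and ih: "take r c = take r c'" by auto
    have "take (2 * r) s = play b c (2 * r)" "take (2 * r) s' = play b c' (2 * r)"
      unfolding s_def s'_def using rM by (simp_all add: take_play)
    then have tk: "take (2 * r) s = take (2 * r) s'" using play_dep[OF ih] by simp
    have ls: "2 * r < length s" "2 * r < length s'" unfolding s_def s'_def using rM by auto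
    have fr: "fate s r = fate s' r" using assms(3) rM unfolding s_def s'_def by blast
    have he: "height s (2 * r) = height s' (2 * r)" using height_dep[OF tk] by simp
    have "s ! (2 * r) = s' ! (2 * r)"
    proof (cases "fate s r = Surv")
      case True
      then have "\<not> killed s (2 * r)" "\<not> killed s' (2 * r)" using fr fate_Surv by metis+
      then show ?thesis using survivor_symbol[OF ls(1)] survivor_symbol[OF ls(2)] he assms(4)
        unfolding s_def s'_def by simp
    next
      case False
      then have k: "killed s (2 * r)" "killed s' (2 * r)" using fr fate_Surv by metis+
      have "kill_size s (2 * r) = kill_size s' (2 * r)"
        using kill_size_determined[OF assms(3)[folded s_def s'_def] tk rM k(1)] .
      then show ?thesis using killed_symbol(3)[OF ls(1) k(1)] killed_symbol(3)[OF ls(2) k(2)] tk he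
        by simp
    qed
    then have "c ! r = c' ! r" using nth_play_Ann[OF rM, of b] unfolding s_def s'_def by simp
    then show ?case using ih rM assms(1,2) by (simp add: take_Suc_conv_app_nth)
  qed simp
  then show ?thesis using assms(1,2) by (metis order.refl take_all)
qed

section \<open>Counting fate records\<close>

(* Two Ann moves recorded as Kill are killed at different times: if they were killed
   by the same erasure, the later one would have a killed parent with the same kill
   time, hence the same kill size, and would have been recorded as Cont. *)
lemma kill_times_distinct:
  assumes "j < j'" "fate s j = Kill h" "fate s j' = Kill h'"
  shows "kill_time s (2 * j) \<noteq> kill_time s (2 * j')"
proof
  assume eq: "kill_time s (2 * j) = kill_time s (2 * j')"
  define \<tau> where "\<tau> = kill_time s (2 * j')"
  have kj: "killed s (2 * j)" using fate_Kill[OF assms(2)] by blast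
  have kj': "killed s (2 * j')"
    and not_cont: "\<not> (has_parent s j' \<and> killed s (2 * parent s j')
                    \<and> kill_size s (2 * parent s j') = kill_size s (2 * j'))"
    using fate_Kill[OF assms(3)] by blast+
  note p1 = kill_time_props[OF kj] and p2 = kill_time_props[OF kj']
  have al: "alive s (2 * j) (2 * j')" unfolding alive_def
    using eq p1(4) p2(1) by fastforce
  have hp: "has_parent s j'" unfolding has_parent_def using al assms(1) by auto
  define p where "p = parent s j'"
  have pp: "p < j'" "alive s (2 * p) (2 * j')" "j \<le> p"
    using parent_props[OF hp] al assms(1) unfolding p_def by auto
  have ljp: "height s (2 * j) \<le> height s (2 * p)"
  proof (cases "p = j")
    case False
    then have "2 * j < 2 * p" "2 * p \<le> 2 * j'" using pp by auto
    then show ?thesis using al unfolding alive_def by fastforce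
  qed simp
  have tp: "2 * p < \<tau>" "\<tau> \<le> length s" "height s \<tau> \<le> height s (2 * p)"
    using p2(1,2) p1(3) pp(1) eq ljp unfolding \<tau>_def by auto
  have kp: "killed s (2 * p)" unfolding killed_def using tp by blast
  have "kill_time s (2 * p) = \<tau>"
  proof (rule ccontr)
    assume ne: "kill_time s (2 * p) \<noteq> \<tau>"
    have le: "kill_time s (2 * p) \<le> \<tau>" unfolding kill_time_def
      using tp by (intro Least_le) auto
    note p3 = kill_time_props[OF kp]
    have gt: "2 * j' < kill_time s (2 * p)"
    proof (rule ccontr)
      assume "\<not> 2 * j' < kill_time s (2 * p)"
      then show False using pp(2) p3(1) p3(3) unfolding alive_def by fastforce
    qed
    have "height s (2 * p) < height s (2 * j')" using pp unfolding alive_def by auto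
    then have "height s (kill_time s (2 * p)) < height s (2 * j')" using p3(3) by simp
    moreover have "kill_time s (2 * p) < kill_time s (2 * j')" using le ne unfolding \<tau>_def by simp
    ultimately show False using p2(4)[OF gt] by simp
  qed
  then have "kill_size s (2 * p) = kill_size s (2 * j')" unfolding kill_size_def \<tau>_def by simp
  then show False using not_cont hp kp unfolding p_def by simp
qed

lemma kill_time_inj: "inj_on (\<lambda>r. kill_time s (2 * r)) {r. \<exists>h. fate s r = Kill h}"
proof (rule inj_onI)
  fix x y assume xy: "x \<in> {r. \<exists>h. fate s r = Kill h}" "y \<in> {r. \<exists>h. fate s r = Kill h}"
    and eq: "kill_time s (2 * x) = kill_time s (2 * y)"
  obtain hx hy where k: "fate s x = Kill hx" "fate s y = Kill hy" using xy by auto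
  show "x = y"
  proof (cases x y rule: linorder_cases)
    case less then show ?thesis using kill_times_distinct[OF less k] eq by simp
  next
    case greater then show ?thesis using kill_times_distinct[OF greater k(2,1)] eq by simp
  qed
qed

fun fate_size :: "fate \<Rightarrow> nat" where
  "fate_size (Kill h) = h" | "fate_size Surv = 0" | "fate_size Cont = 0"

definition kill_sum :: "fate list \<Rightarrow> nat" where
  "kill_sum fs = sum_list (map fate_size fs)"

definition surv_count :: "fate list \<Rightarrow> nat" where
  "surv_count fs = length (filter (\<lambda>e. e = Surv) fs)"

definition fate_alphabet :: "nat \<Rightarrow> fate set" where
  "fate_alphabet n = {Surv, Cont} \<union> Kill ` {1..n}"

definition fates :: "'a list \<Rightarrow> nat \<Rightarrow> fate list" where
  "fates s M = map (fate s) [0..<M]"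

(* Kill sizes are bounded by the height, so in a short game the record uses a finite
   alphabet. *)
lemma fates_in_alphabet:
  assumes "length s = 2 * M" "\<forall>t \<le> 2 * M. height s t < n"
  shows "set (fates s M) \<subseteq> fate_alphabet n"
proof
  fix e assume "e \<in> set (fates s M)"
  then obtain r where r: "r < M" "e = fate s r" unfolding fates_def by auto
  show "e \<in> fate_alphabet n"
  proof (cases e)
    case (Kill h)
    then have k: "killed s (2 * r)" "h = kill_size s (2 * r)" using fate_Kill r by metis+
    have "h \<le> height s (2 * r)" "1 \<le> h" using killed_symbol(1,2)[OF _ k(1)] k(2) assms r by auto
    moreover have "height s (2 * r) < n" using assms(2) r by simp
    ultimately show ?thesis using Kill unfolding fate_alphabet_def by auto
  qed (auto simp: fate_alphabet_def)
qed

(* Surviving moves occupy distinct positions of the final sequence. *)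
lemma surv_count_le_height:
  assumes "length s = 2 * M"
  shows "surv_count (fates s M) \<le> height s (2 * M)"
proof -
  define R where "R = {r. r < M \<and> fate s r = Surv}"
  have surv: "height s (2 * r) < height s t'" if "r \<in> R" "2 * r < t'" "t' \<le> 2 * M" for r t'
  proof -
    have "\<not> killed s (2 * r)" using that(1) fate_Surv unfolding R_def by blast
    then show ?thesis using that assms unfolding killed_def by (metis not_le)
  qed
  have "{i. i < M \<and> fates s M ! i = Surv} = R" unfolding R_def fates_def by auto
  then have cR: "surv_count (fates s M) = card R"
    unfolding surv_count_def length_filter_conv_card by (simp add: fates_def)
  have inj: "inj_on (\<lambda>r. height s (2 * r)) R"
  proof (rule inj_onI)
    fix x y assume xy: "x \<in> R" "y \<in> R" "height s (2 * x) = height s (2 * y)"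
    have "x < M" "y < M" using xy unfolding R_def by auto
    then show "x = y" using surv[OF xy(1), of "2 * y"] surv[OF xy(2), of "2 * x"] xy(3)
      by (cases x y rule: linorder_cases) auto
  qed
  have "(\<lambda>r. height s (2 * r)) ` R \<subseteq> {..<height s (2 * M)}"
    using surv[of _ "2 * M"] unfolding R_def by auto
  then have "card R \<le> card {..<height s (2 * M)}" using card_inj_on_le[OF inj] by blast
  then show ?thesis using cR by simp
qed

(* Kill moves have distinct kill times and the kill size is the number of symbols
   erased at the kill time, so by the telescoping identity the sizes add up to at
   most the number 2M of moves. *)
lemma kill_sum_le:
  assumes "length s = 2 * M"
  shows "kill_sum (fates s M) \<le> 2 * M"
proof -
  define RK where "RK = {r. r < M \<and> (\<exists>h. fate s r = Kill h)}"
  have inj: "inj_on (\<lambda>r. kill_time s (2 * r)) RK"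
    by (rule inj_on_subset[OF kill_time_inj]) (auto simp: RK_def)
  have img: "(\<lambda>r. kill_time s (2 * r)) ` RK \<subseteq> {1..2 * M}"
  proof
    fix x assume "x \<in> (\<lambda>r. kill_time s (2 * r)) ` RK"
    then obtain r h where r: "x = kill_time s (2 * r)" "fate s r = Kill h" unfolding RK_def by auto
    have "killed s (2 * r)" using fate_Kill[OF r(2)] by blast
    then show "x \<in> {1..2 * M}" using kill_time_props(1,2)[of s "2 * r"] r assms by auto
  qed
  have "kill_sum (fates s M) = (\<Sum>r\<in>{0..<M}. fate_size (fate s r))"
    unfolding kill_sum_def fates_def by (simp add: interv_sum_list_conv_sum_set_nat comp_def)
  also have "\<dots> = (\<Sum>r\<in>RK. fate_size (fate s r))"
  proof (rule sum.mono_neutral_right)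
    show "\<forall>i\<in>{0..<M} - RK. fate_size (fate s i) = 0"
      unfolding RK_def by (metis (mono_tags, lifting) DiffE fate.exhaust fate_size.simps(2,3)
          atLeastLessThan_iff mem_Collect_eq)
  qed (auto simp: RK_def)
  also have "\<dots> = (\<Sum>r\<in>RK. erased_at s (kill_time s (2 * r)))"
  proof (rule sum.cong)
    fix r assume "r \<in> RK"
    then obtain h where "fate s r = Kill h" unfolding RK_def by auto
    then show "fate_size (fate s r) = erased_at s (kill_time s (2 * r))"
      using fate_Kill unfolding kill_size_def by fastforce
  qed simp
  also have "\<dots> = (\<Sum>t\<in>(\<lambda>r. kill_time s (2 * r)) ` RK. erased_at s t)"
    using inj by (simp add: sum.reindex)
  also have "\<dots> \<le> (\<Sum>t = 1..2 * M. erased_at s t)"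
    using img by (intro sum_mono2) auto
  also have "\<dots> \<le> 2 * M" using erased_at_telescope[of "2 * M" s] assms by simp
  finally show ?thesis .
qed

definition fate_records :: "nat \<Rightarrow> nat \<Rightarrow> fate list set" where
  "fate_records n M = {fs. set fs \<subseteq> fate_alphabet n \<and> length fs = M
                          \<and> kill_sum fs \<le> 2 * M \<and> surv_count fs \<le> n - 1}"

(* Weights for the count: every record of fate_records n M has weight at least
   (4/9)^M 9^-(n-1), and the weights of the alphabet sum to at most 28/9. *)
fun weight :: "fate \<Rightarrow> real" where
  "weight Surv = 1/9" | "weight Cont = 1" | "weight (Kill h) = (2/3) ^ h"

lemma prod_weight: "prod_list (map weight fs) = (2/3) ^ kill_sum fs * (1/9) ^ surv_count fs"
proof (induction fs)
  case (Cons e fs)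
  then show ?case by (cases e) (auto simp: kill_sum_def surv_count_def power_add)
qed (simp add: kill_sum_def surv_count_def)

lemma sum_weight_alphabet: "(\<Sum>e\<in>fate_alphabet n. weight e) \<le> 28/9"
proof -
  have split: "fate_alphabet n = insert Surv (insert Cont (Kill ` {1..n}))"
    unfolding fate_alphabet_def by auto
  have geo: "(\<Sum>h = 1..m. (2/3::real) ^ h) = 2 - 2 * (2/3) ^ m" for m
    by (induction m) (simp_all add: sum.cl_ivl_Suc)
  have "(\<Sum>e\<in>Kill ` {1..n}. weight e) = (\<Sum>h = 1..n. weight (Kill h))"
    by (rule sum.reindex[unfolded comp_def]) (simp add: inj_on_def)
  also have "\<dots> = 2 - 2 * (2/3) ^ n" using geo by simp
  finally have "(\<Sum>e\<in>Kill ` {1..n}. weight e) \<le> 2" by simp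
  moreover have "(\<Sum>e\<in>fate_alphabet n. weight e) = 1/9 + (1 + (\<Sum>e\<in>Kill ` {1..n}. weight e))"
    unfolding split by (subst sum.insert; auto)+
  ultimately show ?thesis by simp
qed

lemma sum_prod_words:
  fixes f :: "'a \<Rightarrow> 'b :: comm_semiring_1"
  assumes "finite A"
  shows "(\<Sum>xs\<in>{xs. set xs \<subseteq> A \<and> length xs = M}. prod_list (map f xs)) = (\<Sum>x\<in>A. f x) ^ M"
proof (induction M)
  case 0
  have "{xs. set xs \<subseteq> A \<and> length xs = 0} = {[]}" by auto
  then show ?case by simp
next
  case (Suc M)
  let ?L = "{xs. set xs \<subseteq> A \<and> length xs = M}"
  have words: "{xs. set xs \<subseteq> A \<and> length xs = Suc M} = (\<lambda>(x, xs). x # xs) ` (A \<times> ?L)"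
    by (auto simp: length_Suc_conv)
  have inj: "inj_on (\<lambda>(x, xs). x # xs) (A \<times> ?L)" by (auto simp: inj_on_def)
  have "(\<Sum>xs\<in>{xs. set xs \<subseteq> A \<and> length xs = Suc M}. prod_list (map f xs))
      = (\<Sum>p\<in>A \<times> ?L. f (fst p) * prod_list (map f (snd p)))"
    unfolding words sum.reindex[OF inj] by (rule sum.cong) auto
  also have "\<dots> = (\<Sum>x\<in>A. f x) * (\<Sum>xs\<in>?L. prod_list (map f xs))"
    by (simp add: sum_product sum.cartesian_product case_prod_beta)
  finally show ?case using Suc by simp
qed

lemma power_times_inverse_power_ge_1: "k \<le> m \<Longrightarrow> (x::real) \<ge> 1 \<Longrightarrow> 1 \<le> x ^ m * (1/x) ^ k"
proof -
  assume a: "k \<le> m" "x \<ge> 1"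
  have "x ^ m * (1/x) ^ k = x ^ (m - k) * (x ^ k * (1/x) ^ k)"
    using a by (simp add: power_add[symmetric])
  also have "x ^ k * (1/x) ^ k = 1" using a by (simp add: power_mult_distrib[symmetric])
  finally show ?thesis using a by simp
qed

lemma card_fate_records: "real (card (fate_records n M)) \<le> 7 ^ M * 9 ^ (n - 1)"
proof -
  let ?L = "{fs. set fs \<subseteq> fate_alphabet n \<and> length fs = M}"
  let ?g = "\<lambda>fs. (9/4) ^ M * 9 ^ (n - 1) * prod_list (map weight fs)"
  have fin: "finite (fate_alphabet n)" unfolding fate_alphabet_def by simp
  have "real (card (fate_records n M)) = (\<Sum>fs\<in>fate_records n M. (1::real))" by simp
  also have "\<dots> \<le> (\<Sum>fs\<in>fate_records n M. ?g fs)"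
  proof (rule sum_mono)
    fix fs assume "fs \<in> fate_records n M"
    then have fs: "kill_sum fs \<le> 2 * M" "surv_count fs \<le> n - 1" unfolding fate_records_def by auto
    have a: "1 \<le> (3/2::real) ^ (2 * M) * (1/(3/2)) ^ kill_sum fs"
      by (rule power_times_inverse_power_ge_1) (use fs in auto)
    have b: "1 \<le> (9::real) ^ (n - 1) * (1/9) ^ surv_count fs"
      by (rule power_times_inverse_power_ge_1) (use fs in auto)
    have "(3/2::real) ^ (2 * M) = ((3/2) ^ 2) ^ M" by (simp add: power_mult)
    also have "\<dots> = (9/4) ^ M" by (simp add: power2_eq_square)
    finally have "?g fs = ((3/2::real) ^ (2 * M) * (1/(3/2)) ^ kill_sum fs)
                       * ((9::real) ^ (n - 1) * (1/9) ^ surv_count fs)"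
      by (simp add: prod_weight)
    also have "\<dots> \<ge> 1" using a b by (metis mult_mono' mult.right_neutral order.trans zero_le_one)
    finally show "1 \<le> ?g fs" .
  qed
  also have "\<dots> \<le> (\<Sum>fs\<in>?L. ?g fs)"
  proof (rule sum_mono2)
    show "finite ?L" using finite_lists_length_eq[OF fin] by simp
    show "fate_records n M \<subseteq> ?L" unfolding fate_records_def by auto
  qed (simp add: prod_weight)
  also have "\<dots> = (9/4) ^ M * 9 ^ (n - 1) * (\<Sum>fs\<in>?L. prod_list (map weight fs))"
    by (simp add: sum_distrib_left)
  also have "\<dots> = (9/4) ^ M * 9 ^ (n - 1) * (\<Sum>e\<in>fate_alphabet n. weight e) ^ M"
    by (simp add: sum_prod_words[OF fin])
  also have "\<dots> \<le> (9/4) ^ M * 9 ^ (n - 1) * (28/9) ^ M"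
  proof -
    have "0 \<le> (\<Sum>e\<in>fate_alphabet n. weight e)"
      by (rule sum_nonneg) (case_tac x; simp)
    then have "(\<Sum>e\<in>fate_alphabet n. weight e) ^ M \<le> (28/9) ^ M"
      using sum_weight_alphabet power_mono by blast
    then show ?thesis by simp
  qed
  also have "\<dots> = 7 ^ M * 9 ^ (n - 1)" by (simp add: power_mult_distrib[symmetric])
  finally show ?thesis .
qed

lemma card_short_words:
  assumes "finite S" "card S \<ge> 1"
  shows "card {xs. set xs \<subseteq> S \<and> length xs < n} \<le> n * card S ^ n"
proof -
  have e: "{xs. set xs \<subseteq> S \<and> length xs < n} = (\<Union>L\<in>{..<n}. {xs. set xs \<subseteq> S \<and> length xs = L})"
    by auto
  have "card {xs. set xs \<subseteq> S \<and> length xs < n}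
      \<le> (\<Sum>L\<in>{..<n}. card {xs. set xs \<subseteq> S \<and> length xs = L})"
    unfolding e by (rule card_UN_le) simp
  also have "\<dots> = (\<Sum>L\<in>{..<n}. card S ^ L)" using card_lists_length_eq[OF assms(1)] by simp
  also have "\<dots> \<le> (\<Sum>L\<in>{..<n}. card S ^ n)"
    by (rule sum_mono) (use assms(2) in \<open>auto intro: power_increasing\<close>)
  finally show ?thesis by simp
qed

section \<open>Compression: some list of Ann moves beats a fixed Ben strategy\<close>

lemma losing_play_record:
  assumes "set c \<subseteq> S" "\<forall>h. b h \<in> S" "length c = M"
    and low: "\<forall>t \<le> 2 * M. height (play b c (2 * M)) t < n"
  shows "fates (play b c (2 * M)) M \<in> fate_records n M"
    and "replay (play b c (2 * M)) \<in> {xs. set xs \<subseteq> S \<and> length xs < n}"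
proof -
  let ?s = "play b c (2 * M)"
  have ls: "length ?s = 2 * M" by simp
  have "height ?s (2 * M) < n" using low by simp
  then have "surv_count (fates ?s M) \<le> n - 1"
    using surv_count_le_height[OF ls] by simp
  then show "fates ?s M \<in> fate_records n M"
    unfolding fate_records_def using fates_in_alphabet[OF ls low] kill_sum_le[OF ls]
    by (simp add: fates_def)
  have "set (replay ?s) \<subseteq> S" using set_replay[of ?s] set_play[OF assms(1-3) order.refl] by blast
  moreover have "length (replay ?s) < n" using low[rule_format, of "2 * M"] unfolding height_def by simp
  ultimately show "replay ?s \<in> {xs. set xs \<subseteq> S \<and> length xs < n}" by simp
qed

(* If |S|^M exceeds the number of possible encodings, the encoding of losing plays
   cannot be injective, so some list of Ann moves reaches height n. *)
lemma some_ann_list_reaches: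
  assumes fin: "finite S" and ne: "card S \<ge> 1" and bS: "\<forall>h. b h \<in> S"
    and big: "real (card S) ^ M > 7 ^ M * 9 ^ (n - 1) * (real n * real (card S) ^ n)"
  shows "\<exists>c. set c \<subseteq> S \<and> length c = M \<and> (\<exists>t \<le> 2 * M. n \<le> height (play b c (2 * M)) t)"
proof (rule ccontr)
  assume neg: "\<not> ?thesis"
  let ?C = "{c. set c \<subseteq> S \<and> length c = M}"
  let ?W = "{xs. set xs \<subseteq> S \<and> length xs < n}"
  define enc where "enc c = (fates (play b c (2 * M)) M, replay (play b c (2 * M)))" for c
  have inj: "inj_on enc ?C"
  proof (rule inj_onI)
    fix c c' assume "c \<in> ?C" "c' \<in> ?C" "enc c = enc c'"
    then show "c = c'"
      unfolding enc_def fates_def using play_decoding[of c M c' b] by (simp add: map_eq_conv)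
  qed
  have img: "enc ` ?C \<subseteq> fate_records n M \<times> ?W"
  proof
    fix x assume "x \<in> enc ` ?C"
    then obtain c where c: "set c \<subseteq> S" "length c = M" "x = enc c" by auto
    have "\<forall>t \<le> 2 * M. height (play b c (2 * M)) t < n" using neg c(1,2) by (auto simp: not_le[symmetric])
    then show "x \<in> fate_records n M \<times> ?W"
      using losing_play_record[OF c(1) bS c(2)] c(3) unfolding enc_def by simp
  qed
  have "finite (fate_alphabet n)" unfolding fate_alphabet_def by simp
  then have "finite (fate_records n M)"
    by (rule finite_subset[OF _ finite_lists_length_eq[of _ M], rotated]) (auto simp: fate_records_def)
  moreover have "finite ?W"
    by (rule finite_subset[OF _ finite_lists_length_le[OF fin, of n]]) auto
  ultimately have "card ?C \<le> card (fate_records n M) * card ?W"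
    using card_inj_on_le[OF inj img] by (simp add: card_cartesian_product)
  then have "card S ^ M \<le> card (fate_records n M) * card ?W"
    using card_lists_length_eq[OF fin] by simp
  then have "real (card S) ^ M \<le> real (card (fate_records n M)) * real (card ?W)"
    by (metis of_nat_le_iff of_nat_mult of_nat_power)
  also have "\<dots> \<le> (7 ^ M * 9 ^ (n - 1)) * (real n * real (card S) ^ n)"
  proof (rule mult_mono)
    have "card ?W \<le> n * card S ^ n" by (rule card_short_words[OF fin ne])
    then show "real (card ?W) \<le> real n * real (card S) ^ n"
      by (metis of_nat_le_iff of_nat_mult of_nat_power)
  qed (use card_fate_records in auto)
  finally show False using big by simp
qed

section \<open>Determinacy of the game with a fixed horizon\<close>

definition pick :: "'a set \<Rightarrow> ('a \<Rightarrow> bool) \<Rightarrow> 'a" where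
  "pick S P = (if \<exists>a\<in>S. P a then SOME a. a \<in> S \<and> P a else SOME a. a \<in> S)"

lemma pick_in:
  assumes "S \<noteq> {}"
  shows "pick S P \<in> S"
proof (cases "\<exists>a\<in>S. P a")
  case True
  then have "\<exists>a. a \<in> S \<and> P a" by blast
  from someI_ex[OF this] show ?thesis using True unfolding pick_def by simp
next
  case False
  have "\<exists>a. a \<in> S" using assms by blast
  from someI_ex[OF this] show ?thesis using False unfolding pick_def by simp
qed

lemma pick_sat:
  assumes "\<exists>a\<in>S. P a"
  shows "P (pick S P)"
proof -
  have "\<exists>a. a \<in> S \<and> P a" using assms by blast
  from someI_ex[OF this] show ?thesis using assms unfolding pick_def by simp
qed

(* ann_wins S n d h: from move history h, with d moves left, Ann (moving at even
   times) can force the height to reach n at some time. *)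
fun ann_wins :: "'a set \<Rightarrow> nat \<Rightarrow> nat \<Rightarrow> 'a list \<Rightarrow> bool" where
  "ann_wins S n 0 h \<longleftrightarrow> (\<exists>i \<le> length h. n \<le> length (replay (take i h)))"
| "ann_wins S n (Suc d) h \<longleftrightarrow> (if even (length h) then \<exists>a\<in>S. ann_wins S n d (h @ [a])
                                 else \<forall>b\<in>S. ann_wins S n d (h @ [b]))"

(* If Ann could not win the 2M-move game, Ben would have a strategy keeping every
   position losing for Ann, contradicting the compression lemma. *)
lemma ann_wins_start:
  assumes fin: "finite S" and ne: "card S \<ge> 1"
    and big: "real (card S) ^ M > 7 ^ M * 9 ^ (n - 1) * (real n * real (card S) ^ n)"
  shows "ann_wins S n (2 * M) []"
proof (rule ccontr)
  assume lost: "\<not> ann_wins S n (2 * M) []"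
  define ben where "ben h = pick S (\<lambda>b. \<not> ann_wins S n (2 * M - length h - 1) (h @ [b]))" for h
  have "S \<noteq> {}" using ne by auto
  then have benS: "\<forall>h. ben h \<in> S" unfolding ben_def by (simp add: pick_in)
  obtain c where c: "set c \<subseteq> S" "length c = M" "\<exists>t \<le> 2 * M. n \<le> height (play ben c (2 * M)) t"
    using some_ann_list_reaches[OF fin ne benS big] by blast
  have "\<not> ann_wins S n (2 * M - k) (play ben c k)" if "k \<le> 2 * M" for k
    using that
  proof (induction k)
    case (Suc k)
    define d where "d = 2 * M - Suc k"
    have "2 * M - k = Suc d" using Suc.prems unfolding d_def by simp
    then have nw: "\<not> ann_wins S n (Suc d) (play ben c k)" using Suc by simp
    show ?case
    proof (cases "even k")
      case True
      have "k div 2 < length c" using Suc.prems c(2) True by simp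
      then have "c ! (k div 2) \<in> S" using c(1) nth_mem by blast
      then have "\<not> ann_wins S n d (play ben c k @ [c ! (k div 2)])" using nw True by auto
      then show ?thesis using True unfolding d_def by simp
    next
      case False
      have "\<exists>b\<in>S. \<not> ann_wins S n d (play ben c k @ [b])" using nw False by auto
      note choice = pick_sat[OF this]
      have "ben (play ben c k) = pick S (\<lambda>b. \<not> ann_wins S n d (play ben c k @ [b]))"
        unfolding ben_def d_def by simp
      then have "\<not> ann_wins S n d (play ben c k @ [ben (play ben c k)])"
        using choice by simp
      then show ?thesis using False unfolding d_def by simp
    qed
  qed (use lost in simp)
  then have "\<not> ann_wins S n 0 (play ben c (2 * M))" by (metis diff_self_eq_0 order.refl)
  then show False using c(3) unfolding height_def by auto
qed

lemma history_length [simp]: "length (history ann ben k) = k"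
  by (induction k) auto

lemma history_take: "k \<le> K \<Longrightarrow> take k (history ann ben K) = history ann ben k"
  by (induction K) (auto simp: le_Suc_eq)

lemma ann_strategy_from_win:
  assumes ne: "S \<noteq> {}" and win: "ann_wins S n (2 * M) []"
  shows "\<exists>ann. (\<forall>h. ann h \<in> S) \<and> (\<forall>ben. (\<forall>i. ben i \<in> S) \<longrightarrow>
           (\<exists>k \<le> 2 * M. n \<le> length (current_seq ann ben k)))"
proof -
  define ann where "ann h = pick S (\<lambda>a. ann_wins S n (2 * M - length h - 1) (h @ [a]))" for h
  have annS: "\<forall>h. ann h \<in> S" unfolding ann_def by (simp add: pick_in[OF ne])
  have "\<exists>k \<le> 2 * M. n \<le> length (current_seq ann ben k)" if benS: "\<forall>i. ben i \<in> S" for ben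
  proof -
    let ?H = "history ann ben"
    have "ann_wins S n (2 * M - k) (?H k)" if "k \<le> 2 * M" for k
      using that
    proof (induction k)
      case (Suc k)
      define d where "d = 2 * M - Suc k"
      have "2 * M - k = Suc d" using Suc.prems unfolding d_def by simp
      then have wk: "ann_wins S n (Suc d) (?H k)" using Suc by simp
      show ?case
      proof (cases "even k")
        case True
        have "\<exists>a\<in>S. ann_wins S n d (?H k @ [a])" using wk True by simp
        note choice = pick_sat[OF this]
        have "2 * M - length (?H k) - 1 = d" unfolding d_def by simp
        then have "ann (?H k) = pick S (\<lambda>a. ann_wins S n d (?H k @ [a]))"
          by (simp only: ann_def[of "?H k"])
        then have "ann_wins S n d (?H k @ [ann (?H k)])"
          using choice by simp
        then show ?thesis using True unfolding d_def by simp
      next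
        case False
        then show ?thesis using wk benS unfolding d_def by simp
      qed
    qed (use win in simp)
    then have "ann_wins S n 0 (?H (2 * M))" by (metis diff_self_eq_0 order.refl)
    then obtain i where i: "i \<le> 2 * M" "n \<le> length (replay (take i (?H (2 * M))))"
      by auto
    have "current_seq ann ben i = replay (take i (?H (2 * M)))"
      unfolding current_seq_def replay_def using history_take[OF i(1), where ann = ann and ben = ben] by simp
    then show ?thesis using i by auto
  qed
  then show ?thesis using annS by blast
qed

lemma discrete_intermediate_value:
  fixes f :: "nat \<Rightarrow> nat"
  assumes "f 0 = 0" "\<And>k. f (Suc k) \<le> f k + 1" "m \<le> f i"
  shows "\<exists>j \<le> i. f j = m"
  using assms(3)
proof (induction i)
  case (Suc i)
  show ?case
  proof (cases "m \<le> f i")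
    case True then show ?thesis using Suc.IH by (meson le_Suc_eq)
  next
    case False
    then have "m = f (Suc i)" using Suc.prems assms(2)[of i] by simp
    then show ?thesis by blast
  qed
qed (use assms(1) in simp)

lemma horizon_exists:
  assumes "card S \<ge> 8"
  shows "\<exists>M. real (card S) ^ M > 7 ^ M * 9 ^ (n - 1) * (real n * real (card S) ^ n)"
proof -
  have "1 < real (card S) / 7" using assms by simp
  then obtain M where M: "9 ^ (n - 1) * (real n * real (card S) ^ n) < (real (card S) / 7) ^ M"
    using real_arch_pow by blast
  have "real (card S) ^ M = (real (card S) / 7) ^ M * 7 ^ M" by (simp add: power_divide)
  then show ?thesis using M by (intro exI[of _ M]) (simp add: mult.commute)
qed

theorem mainTheorem2:
  fixes S :: "'a set" and n :: nat
  assumes "finite S" and "card S \<ge> 8" and "n \<ge> 1"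
  shows "\<exists>ann :: 'a list \<Rightarrow> 'a. (\<forall>h. ann h \<in> S) \<and>
           (\<forall>ben :: nat \<Rightarrow> 'a. (\<forall>i. ben i \<in> S) \<longrightarrow>
              (\<exists>k. length (current_seq ann ben k) = n))"
proof -
  have ne: "card S \<ge> 1" "S \<noteq> {}" using assms(2) by auto
  obtain M where "real (card S) ^ M > 7 ^ M * 9 ^ (n - 1) * (real n * real (card S) ^ n)"
    using horizon_exists[OF assms(2)] by blast
  then have "ann_wins S n (2 * M) []" using ann_wins_start[OF assms(1) ne(1)] by blast
  then obtain ann where annS: "\<forall>h. ann h \<in> S" and reach: "\<forall>ben. (\<forall>i. ben i \<in> S) \<longrightarrow>
      (\<exists>k \<le> 2 * M. n \<le> length (current_seq ann ben k))"
    using ann_strategy_from_win[OF ne(2)] by blast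
  have "\<exists>k. length (current_seq ann ben k) = n" if "\<forall>i. ben i \<in> S" for ben
  proof -
    have "length (current_seq ann ben 0) = 0" "\<And>k. length (current_seq ann ben (Suc k))
        \<le> length (current_seq ann ben k) + 1"
      unfolding current_seq_def by (simp_all add: length_game_move)
    then show ?thesis
      using reach that discrete_intermediate_value[of "\<lambda>k. length (current_seq ann ben k)"] by blast
  qed
  then show ?thesis using annS by blast
qed

end
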